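(* Let $n\ge2$, $N\ge0$ an integer, $0\le\alpha_0<\alpha_1<\dots<\alpha_N$ real numbers, $\bar A_0,\dots,\bar A_N$ real $n\times n$ matrices, and for each $k$ let $F_k$ be either $F_{\bar A_k,\alpha_k}$ or (only when $\bar A_k$ is symmetric positive definite) $\widetilde F_{\bar A_k,\alpha_k}$. Let $A_1,\dots,A_n$ be nonzero $n\times n$ matrices and $G_B$ as in the context. Let $F:\mathbb R^n\to\mathbb R^n$ be one of: (1) $F=G_B$; (2) $F=\sum_{k=0}^NF_k$; (3) $F=\sum_{k=0}^NF_k+G_B$. Assume: (a) in case (1), $G_B$ is $3$-monotone; (b) in case (2), $F_k$ is monotone for $0\le k\le N-1$, $\alpha_N>0$, and $F_N$ is $(\alpha_N+2)$-monotone; (c) in case (3), all $F_k$ and $G_B$ are monotone, and moreover: if $\alpha_N<1$ then $G_B$ is $3$-monotone; if $\alpha_N>1$ then $F_N$ is $(\alpha_N+2)$-monotone; if $\alpha_N=1$ then $F_N$ or $G_B$ is $3$-monotone. Let $\beta=1$ in case (1), $\beta=\alpha_N$ in case (2), $\beta=\max\{\alpha_N,1\}$ in case (3). Then there are $c_1,c_2>0$ such that for all $u,v\in\mathbb R^n$, $$|F(u)-F(v)|\le c_1(1+|u|^\beta+|v|^\beta)|u-v|,\qquad (F(u)-F(v))\cdot(u-v)\ge c_2|u-v|^{\beta+2}.$$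
   Context: $|\cdot|$ is the Euclidean norm. $F_{A,\alpha}(u)=|u|^\alpha Au$ for $\alpha>0$ and $F_{A,0}(u)=Au$; for symmetric positive definite $A$, $\widetilde F_{A,\alpha}(u)=|A^{1/2}u|^\alpha Au$ for $\alpha>0$ and $\widetilde F_{A,0}(u)=Au$. $B(u,v,w)=\mathrm{diag}[u^TA_1v,\dots,u^TA_nv]\,w$; $G_B(0)=0$ and $G_B(u)=B(u,u,u)/|u|$ for $u\ne0$. A map $F$ is monotone if $(F(u)-F(v))\cdot(u-v)\ge0$ for all $u,v$; for $\gamma>0$ it is $\gamma$-monotone if there is $C>0$ with $(F(u)-F(v))\cdot(u-v)\ge C|u-v|^\gamma$ for all $u,v$. *)

theory Defs
  imports "HOL-Analysis.Analysis"
begin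

definition sym_pos_def :: "real^'n^'n \<Rightarrow> bool" where
  "sym_pos_def A \<longleftrightarrow> transpose A = A \<and> (\<forall>x. x \<noteq> 0 \<longrightarrow> x \<bullet> (A *v x) > 0)"

definition mat_sqrt :: "real^'n^'n \<Rightarrow> real^'n^'n" where
  "mat_sqrt A = (THE S. sym_pos_def S \<and> S ** S = A)"

definition F_map :: "real^'n^'n \<Rightarrow> real \<Rightarrow> real^'n \<Rightarrow> real^'n" where
  "F_map A \<alpha> u = (if \<alpha> > 0 then norm u powr \<alpha> *\<^sub>R (A *v u) else A *v u)"

definition Ft_map :: "real^'n^'n \<Rightarrow> real \<Rightarrow> real^'n \<Rightarrow> real^'n" where
  "Ft_map A \<alpha> u = (if \<alpha> > 0 then norm (mat_sqrt A *v u) powr \<alpha> *\<^sub>R (A *v u) else A *v u)"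

definition B_map :: "('n \<Rightarrow> real^'n^'n) \<Rightarrow> real^'n \<Rightarrow> real^'n \<Rightarrow> real^'n \<Rightarrow> real^'n" where
  "B_map As u v w = (\<chi> i. (u \<bullet> (As i *v v)) * w $ i)"

definition G_B :: "('n \<Rightarrow> real^'n^'n) \<Rightarrow> real^'n \<Rightarrow> real^'n" where
  "G_B As u = (if u = 0 then 0 else (1 / norm u) *\<^sub>R B_map As u u u)"

definition monotone_map :: "(real^'n \<Rightarrow> real^'n) \<Rightarrow> bool" where
  "monotone_map F \<longleftrightarrow> (\<forall>u v. (F u - F v) \<bullet> (u - v) \<ge> 0)"

definition gamma_monotone :: "real \<Rightarrow> (real^'n \<Rightarrow> real^'n) \<Rightarrow> bool" where
  "gamma_monotone \<gamma> F \<longleftrightarrow> (\<exists>C>0. \<forall>u v. (F u - F v) \<bullet> (u - v) \<ge> C * norm (u - v) powr \<gamma>)"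

end

theory Submission
  imports Defs
begin

(* Each F_k is u |-> A g(u) or u |-> S g(S u), where g(w) = |w|^alpha w and S is the symmetric
   positive definite square root of A, so that |A^(1/2) u|^alpha A u = S g(S u); the square root
   comes from the spectral theorem, obtained by maximising the quadratic form on unit spheres of
   orthogonal complements. The estimate |g(u) - g(v)| <= (2 + alpha)(|u|^alpha + |v|^alpha)|u - v|
   and |u|^alpha <= 1 + |u|^beta for alpha <= beta give the upper bound for every F_k, and this
   bound survives sums and composition with linear maps on either side. The i-th component of
   G_B(u) is q_i(u) u_i, where q_i(u) = u^T A_i u / |u| is Lipschitz with |q_i(u)| <= C |u|; this
   gives the upper bound for G_B when beta >= 1. For the lower bound, adding monotone maps to a
   gamma-monotone map keeps it gamma-monotone, and in each case the hypotheses provide one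
   (beta + 2)-monotone summand. *)

section \<open>Lipschitz bounds with polynomial growth\<close>

lemma one_minus_powr_le:
  fixes t \<alpha> :: real
  assumes "0 \<le> t" "t \<le> 1" "0 < \<alpha>"
  shows "1 - t powr \<alpha> \<le> (1 + \<alpha>) * (1 - t)"
proof (cases "t = 0")
  case True
  then show ?thesis using assms by simp
next
  case False
  define m where "m = nat \<lceil>\<alpha>\<rceil>"
  have m: "\<alpha> \<le> real m" "real m \<le> \<alpha> + 1"
    unfolding m_def using assms(3) by linarith+
  have "1 - real m * (1 - t) \<le> t ^ m"
    using Bernoulli_inequality[of "t - 1" m] assms by (simp add: algebra_simps)
  also have "t ^ m = t powr real m"
    using False assms by (simp add: powr_realpow)
  also have "\<dots> \<le> t powr \<alpha>"
    using False assms m by (intro powr_mono') auto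
  finally have "1 - t powr \<alpha> \<le> real m * (1 - t)" by linarith
  also have "\<dots> \<le> (1 + \<alpha>) * (1 - t)"
    using m assms by (intro mult_right_mono) auto
  finally show ?thesis .
qed

lemma powr_diff_mult_le:
  fixes a b \<alpha> :: real
  assumes "0 \<le> b" "b \<le> a" "0 < \<alpha>"
  shows "(a powr \<alpha> - b powr \<alpha>) * b \<le> (1 + \<alpha>) * a powr \<alpha> * (a - b)"
proof (cases "a = 0")
  case True
  then show ?thesis using assms by simp
next
  case False
  with assms have "0 < a" by simp
  define t where "t = b / a"
  have t: "0 \<le> t" "t \<le> 1" and b: "b = t * a"
    unfolding t_def using assms \<open>0 < a\<close> by auto
  have "t powr \<alpha> \<le> 1" using t assms by (simp add: powr_le1)
  then have "t * (1 - t powr \<alpha>) \<le> (1 + \<alpha>) * (1 - t)"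
    using one_minus_powr_le[OF t assms(3)] t mult_left_le_one_le[of "1 - t powr \<alpha>" t] by linarith
  then have "a powr \<alpha> * a * (t * (1 - t powr \<alpha>)) \<le> a powr \<alpha> * a * ((1 + \<alpha>) * (1 - t))"
    using \<open>0 < a\<close> by (intro mult_left_mono) auto
  moreover have "b powr \<alpha> = t powr \<alpha> * a powr \<alpha>"
    unfolding b using t \<open>0 < a\<close> by (simp add: powr_mult)
  ultimately show ?thesis
    unfolding b by (simp add: algebra_simps)
qed

lemma norm_powr_scaleR_diff_le:
  fixes u v :: "'a::real_normed_vector"
  assumes "0 < \<alpha>"
  shows "norm (norm u powr \<alpha> *\<^sub>R u - norm v powr \<alpha> *\<^sub>R v)
         \<le> (2 + \<alpha>) * (norm u powr \<alpha> + norm v powr \<alpha>) * norm (u - v)"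
proof -
  have le: "norm (norm u powr \<alpha> *\<^sub>R u - norm v powr \<alpha> *\<^sub>R v) \<le> (2 + \<alpha>) * norm u powr \<alpha> * norm (u - v)"
    if "norm v \<le> norm u" for u v :: 'a
  proof -
    let ?a = "norm u" and ?b = "norm v"
    have "norm u powr \<alpha> *\<^sub>R u - norm v powr \<alpha> *\<^sub>R v
          = ?a powr \<alpha> *\<^sub>R (u - v) + (?a powr \<alpha> - ?b powr \<alpha>) *\<^sub>R v"
      by (simp add: algebra_simps)
    then have "norm (norm u powr \<alpha> *\<^sub>R u - norm v powr \<alpha> *\<^sub>R v)
               \<le> ?a powr \<alpha> * norm (u - v) + \<bar>?a powr \<alpha> - ?b powr \<alpha>\<bar> * ?b"
      by (metis norm_scaleR norm_triangle_ineq abs_of_nonneg powr_ge_zero)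
    also have "\<bar>?a powr \<alpha> - ?b powr \<alpha>\<bar> * ?b \<le> (1 + \<alpha>) * ?a powr \<alpha> * (?a - ?b)"
      using powr_diff_mult_le[of ?b ?a \<alpha>] powr_mono2[of \<alpha> ?b ?a] that assms by simp
    also have "\<dots> \<le> (1 + \<alpha>) * ?a powr \<alpha> * norm (u - v)"
      using assms norm_triangle_ineq2[of u v] by (intro mult_left_mono) auto
    finally show ?thesis by (simp add: algebra_simps)
  qed
  have sum: "(2 + \<alpha>) * x * norm (u - v) \<le> (2 + \<alpha>) * (norm u powr \<alpha> + norm v powr \<alpha>) * norm (u - v)"
    if "x = norm u powr \<alpha> \<or> x = norm v powr \<alpha>" for x
    using that assms by (intro mult_right_mono mult_left_mono) auto
  show ?thesis
  proof (cases "norm v \<le> norm u")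
    case True
    then show ?thesis using le[OF True] sum[of "norm u powr \<alpha>"] by linarith
  next
    case False
    then have "norm (norm v powr \<alpha> *\<^sub>R v - norm u powr \<alpha> *\<^sub>R u) \<le> (2 + \<alpha>) * norm v powr \<alpha> * norm (v - u)"
      by (intro le) simp
    then show ?thesis using sum[of "norm v powr \<alpha>"] by (simp add: norm_minus_commute)
  qed
qed

definition lipschitz_growth :: "real \<Rightarrow> ('a::real_normed_vector \<Rightarrow> 'b::real_normed_vector) \<Rightarrow> bool" where
  "lipschitz_growth \<beta> F \<longleftrightarrow>
     (\<exists>c>0. \<forall>u v. norm (F u - F v) \<le> c * (1 + norm u powr \<beta> + norm v powr \<beta>) * norm (u - v))"

lemma powr_le_one_plus_powr:
  fixes x a b :: real
  assumes "0 \<le> a" "a \<le> b" "0 \<le> x"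
  shows "x powr a \<le> 1 + x powr b"
proof (cases "x \<le> 1")
  case True
  then have "x powr a \<le> 1" using assms by (simp add: powr_le1)
  then show ?thesis using powr_ge_zero[of x b] by linarith
next
  case False
  then have "x powr a \<le> x powr b" using assms by (intro powr_mono) auto
  then show ?thesis by simp
qed

lemma lipschitz_growth_const: "lipschitz_growth \<beta> (\<lambda>u. c)"
  unfolding lipschitz_growth_def by (intro exI[of _ 1]) simp

lemma lipschitz_growth_id: "lipschitz_growth \<beta> (\<lambda>u. u)"
  unfolding lipschitz_growth_def
proof (intro exI[of _ 1] conjI allI)
  fix u v :: 'a
  have "1 \<le> 1 + norm u powr \<beta> + norm v powr \<beta>" by simp
  then show "norm (u - v) \<le> 1 * (1 + norm u powr \<beta> + norm v powr \<beta>) * norm (u - v)"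
    by (simp add: mult_le_cancel_right1)
qed simp

lemma lipschitz_growth_add:
  assumes "lipschitz_growth \<beta> F" "lipschitz_growth \<beta> G"
  shows "lipschitz_growth \<beta> (\<lambda>u. F u + G u)"
proof -
  obtain c where c: "c > 0" "\<And>u v. norm (F u - F v) \<le> c * (1 + norm u powr \<beta> + norm v powr \<beta>) * norm (u - v)"
    using assms(1) unfolding lipschitz_growth_def by blast
  obtain d where d: "d > 0" "\<And>u v. norm (G u - G v) \<le> d * (1 + norm u powr \<beta> + norm v powr \<beta>) * norm (u - v)"
    using assms(2) unfolding lipschitz_growth_def by blast
  show ?thesis unfolding lipschitz_growth_def
  proof (intro exI[of _ "c + d"] conjI allI)
    fix u v
    have "norm (F u + G u - (F v + G v)) \<le> norm (F u - F v) + norm (G u - G v)"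
      by (metis add_diff_add norm_triangle_ineq)
    also have "\<dots> \<le> (c + d) * (1 + norm u powr \<beta> + norm v powr \<beta>) * norm (u - v)"
      using c(2)[of u v] d(2)[of u v] by (simp add: algebra_simps)
    finally show "norm (F u + G u - (F v + G v)) \<le> (c + d) * (1 + norm u powr \<beta> + norm v powr \<beta>) * norm (u - v)" .
  qed (use c d in simp)
qed

lemma lipschitz_growth_sum:
  assumes "finite S" "\<And>k. k \<in> S \<Longrightarrow> lipschitz_growth \<beta> (f k)"
  shows "lipschitz_growth \<beta> (\<lambda>u. \<Sum>k\<in>S. f k u)"
  using assms by (induction S rule: finite_induct) (simp_all add: lipschitz_growth_const lipschitz_growth_add)

lemma lipschitz_growth_linear_comp:
  assumes "bounded_linear f" "lipschitz_growth \<beta> h"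
  shows "lipschitz_growth \<beta> (\<lambda>u. f (h u))"
proof -
  obtain K where K: "K > 0" "\<And>x. norm (f x) \<le> norm x * K"
    using bounded_linear.pos_bounded[OF assms(1)] by blast
  obtain c where c: "c > 0" "\<And>u v. norm (h u - h v) \<le> c * (1 + norm u powr \<beta> + norm v powr \<beta>) * norm (u - v)"
    using assms(2) unfolding lipschitz_growth_def by blast
  show ?thesis unfolding lipschitz_growth_def
  proof (intro exI[of _ "K * c"] conjI allI)
    fix u v
    have "norm (f (h u) - f (h v)) \<le> norm (h u - h v) * K"
      using K(2) by (metis assms(1) linear_diff bounded_linear.linear)
    also have "\<dots> \<le> K * c * (1 + norm u powr \<beta> + norm v powr \<beta>) * norm (u - v)"
      using mult_right_mono[OF c(2)[of u v], of K] K(1) by (simp add: algebra_simps)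
    finally show "norm (f (h u) - f (h v)) \<le> K * c * (1 + norm u powr \<beta> + norm v powr \<beta>) * norm (u - v)" .
  qed (use K c in simp)
qed

lemma lipschitz_growth_comp_linear:
  assumes "bounded_linear f" "lipschitz_growth \<beta> h" "0 \<le> \<beta>"
  shows "lipschitz_growth \<beta> (\<lambda>u. h (f u))"
proof -
  obtain K where K: "K > 0" "\<And>x. norm (f x) \<le> norm x * K"
    using bounded_linear.pos_bounded[OF assms(1)] by blast
  obtain c where c: "c > 0" "\<And>u v. norm (h u - h v) \<le> c * (1 + norm u powr \<beta> + norm v powr \<beta>) * norm (u - v)"
    using assms(2) unfolding lipschitz_growth_def by blast
  have pow: "norm (f x) powr \<beta> \<le> K powr \<beta> * norm x powr \<beta>" for x
  proof -
    have "norm (f x) powr \<beta> \<le> (norm x * K) powr \<beta>" using K assms(3) by (intro powr_mono2) auto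
    then show ?thesis using K by (simp add: powr_mult mult.commute)
  qed
  show ?thesis unfolding lipschitz_growth_def
  proof (intro exI[of _ "c * (1 + K powr \<beta>) * K"] conjI allI)
    fix u v
    have "norm (h (f u) - h (f v)) \<le> c * (1 + norm (f u) powr \<beta> + norm (f v) powr \<beta>) * norm (f u - f v)"
      by (rule c(2))
    also have "\<dots> \<le> c * ((1 + K powr \<beta>) * (1 + norm u powr \<beta> + norm v powr \<beta>)) * (norm (u - v) * K)"
    proof (intro mult_mono mult_left_mono)
      show "1 + norm (f u) powr \<beta> + norm (f v) powr \<beta> \<le> (1 + K powr \<beta>) * (1 + norm u powr \<beta> + norm v powr \<beta>)"
        using pow[of u] pow[of v] powr_ge_zero[of "norm u" \<beta>] powr_ge_zero[of "norm v" \<beta>]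
          powr_ge_zero[of K \<beta>] unfolding ring_distribs by linarith
      show "norm (f u - f v) \<le> norm (u - v) * K"
        using K(2) by (metis assms(1) linear_diff bounded_linear.linear)
    qed (use c K in auto)
    finally show "norm (h (f u) - h (f v)) \<le> c * (1 + K powr \<beta>) * K * (1 + norm u powr \<beta> + norm v powr \<beta>) * norm (u - v)"
      by (simp add: algebra_simps)
  qed (use c K in \<open>simp add: add_pos_nonneg\<close>)
qed

lemma lipschitz_growth_norm_powr_scaleR:
  assumes "0 < \<alpha>" "\<alpha> \<le> \<beta>"
  shows "lipschitz_growth \<beta> (\<lambda>w::'a::real_normed_vector. norm w powr \<alpha> *\<^sub>R w)"
  unfolding lipschitz_growth_def
proof (intro exI[of _ "2 * (2 + \<alpha>)"] conjI allI)
  fix u v :: 'a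
  have "norm x powr \<alpha> \<le> 1 + norm x powr \<beta>" for x :: 'a
    using assms by (intro powr_le_one_plus_powr) auto
  from this[of u] this[of v]
  have "norm u powr \<alpha> + norm v powr \<alpha> \<le> 2 * (1 + norm u powr \<beta> + norm v powr \<beta>)"
    using powr_ge_zero[of "norm u" \<beta>] powr_ge_zero[of "norm v" \<beta>] unfolding distrib_left by linarith
  then have "(2 + \<alpha>) * (norm u powr \<alpha> + norm v powr \<alpha>) * norm (u - v)
             \<le> (2 + \<alpha>) * (2 * (1 + norm u powr \<beta> + norm v powr \<beta>)) * norm (u - v)"
    using assms by (intro mult_right_mono mult_left_mono) auto
  with norm_powr_scaleR_diff_le[OF assms(1), of u v]
  show "norm (norm u powr \<alpha> *\<^sub>R u - norm v powr \<alpha> *\<^sub>R v)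
        \<le> 2 * (2 + \<alpha>) * (1 + norm u powr \<beta> + norm v powr \<beta>) * norm (u - v)"
    by (simp add: algebra_simps)
qed (use assms in simp)

section \<open>Square roots of symmetric positive definite matrices\<close>

lemma symmetric_matrix_inner:
  fixes A :: "real^'n^'n"
  assumes "transpose A = A"
  shows "x \<bullet> (A *v y) = (A *v x) \<bullet> y"
  by (metis assms dot_lmul_matrix vector_transpose_matrix)

definition orthonormal_eigenvectors :: "real^'n^'n \<Rightarrow> (real^'n) set \<Rightarrow> bool" where
  "orthonormal_eigenvectors A E \<longleftrightarrow> finite E \<and> pairwise orthogonal E
     \<and> (\<forall>e\<in>E. norm e = 1 \<and> A *v e = (e \<bullet> (A *v e)) *\<^sub>R e)"

lemma inner_sum_orthonormal:
  assumes "pairwise orthogonal E" "\<And>e. e \<in> E \<Longrightarrow> norm e = 1" "finite E" "e \<in> E"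
  shows "e \<bullet> (\<Sum>e'\<in>E. c e' *\<^sub>R e') = c e"
proof -
  have "e \<bullet> (\<Sum>e'\<in>E. c e' *\<^sub>R e') = (\<Sum>e'\<in>E. if e' = e then c e else 0)"
    unfolding inner_sum_right
    by (rule sum.cong) (use assms in \<open>auto simp: pairwise_def orthogonal_def norm_eq_1\<close>)
  then show ?thesis using assms by simp
qed

lemma card_orthonormal_eigenvectors_le:
  fixes A :: "real^'n^'n"
  assumes "orthonormal_eigenvectors A E"
  shows "card E \<le> CARD('n)"
proof -
  have "0 \<notin> E" using assms unfolding orthonormal_eigenvectors_def by force
  then have "independent E"
    using assms pairwise_orthogonal_independent unfolding orthonormal_eigenvectors_def by blast
  then show ?thesis using independent_bound by fastforce
qed

lemma linear_coeff_zero_if_quadratic_nonpos: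
  fixes a d :: real
  assumes "\<And>t. 2 * t * a + t\<^sup>2 * d \<le> 0"
  shows "a = 0"
proof -
  define t where "t = a / (\<bar>d\<bar> + 1)"
  have "(\<bar>d\<bar> + 1)\<^sup>2 * (2 * t * a + t\<^sup>2 * d) \<le> 0"
    using assms[of t] by (simp add: mult_nonneg_nonpos)
  also have "(\<bar>d\<bar> + 1)\<^sup>2 * (2 * t * a + t\<^sup>2 * d)
             = 2 * (\<bar>d\<bar> + 1) * (t * (\<bar>d\<bar> + 1)) * a + (t * (\<bar>d\<bar> + 1))\<^sup>2 * d"
    by (simp add: algebra_simps power2_eq_square)
  also have "t * (\<bar>d\<bar> + 1) = a"
    unfolding t_def by (simp add: add_pos_nonneg)
  also have "2 * (\<bar>d\<bar> + 1) * a * a + a\<^sup>2 * d = a\<^sup>2 * (2 * (\<bar>d\<bar> + 1) + d)"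
    by (simp add: algebra_simps power2_eq_square)
  finally have "a\<^sup>2 * (2 * (\<bar>d\<bar> + 1) + d) \<le> 0" .
  moreover have "2 * (\<bar>d\<bar> + 1) + d > 0" by (simp add: abs_if)
  ultimately show ?thesis by (simp add: mult_le_0_iff)
qed

text \<open>A maximiser of the quadratic form on the unit sphere of a subspace \<open>W\<close> is, within \<open>W\<close>,
  a critical point: perturbing it to \<open>e + t w\<close> gives a quadratic in \<open>t\<close> with maximum at \<open>0\<close>.\<close>

lemma quadratic_form_max_orthogonal:
  fixes A :: "real^'n^'n"
  assumes sym: "transpose A = A" and W: "subspace W"
    and e: "e \<in> W" "norm e = 1" and max: "\<And>y. y \<in> W \<Longrightarrow> norm y = 1 \<Longrightarrow> y \<bullet> (A *v y) \<le> e \<bullet> (A *v e)"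
    and w: "w \<in> W" "w \<bullet> e = 0"
  shows "w \<bullet> (A *v e) = 0"
proof (rule linear_coeff_zero_if_quadratic_nonpos)
  fix t :: real
  define \<mu> where "\<mu> = e \<bullet> (A *v e)"
  define z where "z = e + t *\<^sub>R w"
  have zz: "z \<bullet> z = 1 + t\<^sup>2 * (w \<bullet> w)"
    unfolding z_def using e(2) w(2)
    by (simp add: inner_add_left inner_add_right inner_commute power2_eq_square norm_eq_1)
  then have "z \<bullet> z > 0" by (simp add: add_pos_nonneg)
  then have "norm z > 0" by (simp add: inner_gt_zero_iff)
  moreover have "z \<in> W" unfolding z_def using W e w by (simp add: subspace_add subspace_scale)
  ultimately have "(1 / norm z) *\<^sub>R z \<in> W" "norm ((1 / norm z) *\<^sub>R z) = 1"
    using W by (auto simp: subspace_scale)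
  then have "((1 / norm z) *\<^sub>R z) \<bullet> (A *v ((1 / norm z) *\<^sub>R z)) \<le> \<mu>"
    unfolding \<mu>_def by (rule max)
  then have "z \<bullet> (A *v z) \<le> \<mu> * (z \<bullet> z)"
    using \<open>norm z > 0\<close> by (simp add: matrix_vector_mult_scaleR power2_norm_eq_inner[symmetric]
        divide_le_eq power2_eq_square mult.commute)
  moreover have "e \<bullet> (A *v w) = w \<bullet> (A *v e)"
    using symmetric_matrix_inner[OF sym, of e w] by (simp add: inner_commute)
  then have "z \<bullet> (A *v z) = \<mu> + 2 * t * (w \<bullet> (A *v e)) + t\<^sup>2 * (w \<bullet> (A *v w))"
    unfolding z_def \<mu>_def
    by (simp add: inner_add_left inner_add_right matrix_vector_right_distrib matrix_vector_mult_scaleR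
        power2_eq_square algebra_simps)
  ultimately show "2 * t * (w \<bullet> (A *v e)) + t\<^sup>2 * (w \<bullet> (A *v w) - \<mu> * (w \<bullet> w)) \<le> 0"
    using zz by (simp add: algebra_simps)
qed

lemma orthonormal_eigenvectors_extend:
  fixes A :: "real^'n^'n"
  assumes sym: "transpose A = A" and E: "orthonormal_eigenvectors A E"
    and x: "x \<noteq> 0" "\<forall>e\<in>E. orthogonal e x"
  shows "\<exists>e. e \<notin> E \<and> orthonormal_eigenvectors A (insert e E)"
proof -
  define W where "W = {y. \<forall>e\<in>E. orthogonal e y}"
  have W: "subspace W" unfolding W_def by (rule subspace_orthogonal_to_vectors)
  have "closed W" unfolding W_def orthogonal_def
    by (simp add: Collect_ball_eq closed_INT closed_hyperplane)
  then have "compact (W \<inter> sphere 0 1)" by (simp add: closed_Int_compact)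
  moreover have "(1 / norm x) *\<^sub>R x \<in> W \<inter> sphere 0 1"
    using x by (simp add: W_def orthogonal_def)
  moreover have "continuous_on (W \<inter> sphere 0 1) (\<lambda>y. y \<bullet> (A *v y))"
    by (intro continuous_intros linear_continuous_on matrix_vector_mul_bounded_linear)
  ultimately obtain e where "e \<in> W \<inter> sphere 0 1"
    and max: "\<And>y. y \<in> W \<inter> sphere 0 1 \<Longrightarrow> y \<bullet> (A *v y) \<le> e \<bullet> (A *v e)"
    using continuous_attains_sup[of "W \<inter> sphere 0 1"] by blast
  then have eW: "e \<in> W" and e1: "norm e = 1" by auto
  define \<mu> where "\<mu> = e \<bullet> (A *v e)"
  \<comment> \<open>\<open>A e \<in> W\<close>, so \<open>z = A e - \<mu> e\<close> lies in \<open>W\<close> and is orthogonal to \<open>e\<close>, hence also to \<open>A e\<close>.\<close>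
  have "(A *v e) \<in> W"
    unfolding W_def orthogonal_def
  proof (intro CollectI ballI)
    fix e' assume "e' \<in> E"
    then have "A *v e' = (e' \<bullet> (A *v e')) *\<^sub>R e'" "e' \<bullet> e = 0"
      using E eW unfolding orthonormal_eigenvectors_def W_def orthogonal_def by auto
    then show "e' \<bullet> (A *v e) = 0" by (metis symmetric_matrix_inner[OF sym] inner_scaleR_left mult_zero_right)
  qed
  define z where "z = A *v e - \<mu> *\<^sub>R e"
  have zW: "z \<in> W" unfolding z_def using W eW \<open>A *v e \<in> W\<close> by (simp add: subspace_diff subspace_scale)
  have ze: "z \<bullet> e = 0"
    unfolding z_def \<mu>_def using e1 by (simp add: inner_diff_left inner_diff_right inner_commute norm_eq_1)
  have "z \<bullet> (A *v e) = 0" using quadratic_form_max_orthogonal[OF sym W eW e1 _ zW ze] max by auto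
  with ze have "z \<bullet> z = 0" unfolding z_def by (simp add: inner_diff_right)
  then have Ae: "A *v e = \<mu> *\<^sub>R e" unfolding z_def by simp
  have "e \<notin> E" using eW e1 unfolding W_def orthogonal_def by (auto simp: norm_eq_1)
  moreover have "orthonormal_eigenvectors A (insert e E)"
    using E eW e1 Ae unfolding orthonormal_eigenvectors_def W_def \<mu>_def
    by (auto simp: pairwise_insert orthogonal_commute norm_eq_1)
  ultimately show ?thesis by blast
qed

lemma orthonormal_eigenbasis_exists:
  fixes A :: "real^'n^'n"
  assumes sym: "transpose A = A"
  obtains E where "orthonormal_eigenvectors A E" "\<And>x. (\<forall>e\<in>E. orthogonal e x) \<Longrightarrow> x = 0"
proof -
  have "orthonormal_eigenvectors A {}" unfolding orthonormal_eigenvectors_def by simp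
  moreover have "\<forall>E. orthonormal_eigenvectors A E \<longrightarrow> card E < Suc CARD('n)"
    using card_orthonormal_eigenvectors_le[of A] by (simp add: less_Suc_eq_le)
  ultimately obtain E where E: "orthonormal_eigenvectors A E"
    and greatest: "\<And>E'. orthonormal_eigenvectors A E' \<Longrightarrow> card E' \<le> card E"
    using ex_has_greatest_nat[of "orthonormal_eigenvectors A" "{}" card "Suc CARD('n)"] by blast
  have "x = 0" if orth: "\<forall>e\<in>E. orthogonal e x" for x
  proof (rule ccontr)
    assume "x \<noteq> 0"
    then obtain e where "e \<notin> E" "orthonormal_eigenvectors A (insert e E)"
      using orthonormal_eigenvectors_extend[OF sym E \<open>x \<noteq> 0\<close> orth] by blast
    moreover have "finite E" using E unfolding orthonormal_eigenvectors_def by simp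
    ultimately show False using greatest[of "insert e E"] by simp
  qed
  with E show thesis by (rule that)
qed

text \<open>With \<open>\<mu> = sqrt c\<close>: \<open>(T + \<mu>) (T e - \<mu> e) = A e - \<mu>\<^sup>2 e = 0\<close>, and \<open>-\<mu> \<le> 0\<close> cannot be an
  eigenvalue of the positive definite \<open>T\<close>.\<close>

lemma sym_pos_sqrt_on_eigenvector:
  fixes T :: "real^'n^'n"
  assumes T: "sym_pos_def T" "T ** T = A" and e: "A *v e = c *\<^sub>R e" "0 \<le> c"
  shows "T *v e = sqrt c *\<^sub>R e"
proof (rule ccontr)
  define \<mu> where "\<mu> = sqrt c"
  define z where "z = T *v e - \<mu> *\<^sub>R e"
  assume "T *v e \<noteq> sqrt c *\<^sub>R e"
  then have "z \<noteq> 0" unfolding z_def \<mu>_def by simp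
  have "T *v z + \<mu> *\<^sub>R z = T *v (T *v e) - (\<mu> * \<mu>) *\<^sub>R e"
    unfolding z_def by (simp add: vec.diff matrix_vector_mult_scaleR algebra_simps)
  also have "\<dots> = 0"
    using T e unfolding \<mu>_def by (simp add: matrix_vector_mul_assoc)
  finally have "T *v z = - \<mu> *\<^sub>R z" by (simp add: eq_neg_iff_add_eq_0)
  then have "z \<bullet> (T *v z) = - \<mu> * (z \<bullet> z)" by simp
  moreover have "0 < z \<bullet> (T *v z)" using T \<open>z \<noteq> 0\<close> unfolding sym_pos_def_def by blast
  moreover have "0 \<le> \<mu> * (z \<bullet> z)" unfolding \<mu>_def using e(2) by simp
  ultimately show False by linarith
qed

lemma orthonormal_eigenbasis_expansion:
  assumes E: "orthonormal_eigenvectors A E" and complete: "\<And>x. (\<forall>e\<in>E. orthogonal e x) \<Longrightarrow> x = 0"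
  shows "x = (\<Sum>e\<in>E. (e \<bullet> x) *\<^sub>R e)"
proof -
  have "x - (\<Sum>e\<in>E. (e \<bullet> x) *\<^sub>R e) = 0"
    using E by (intro complete)
      (simp add: orthogonal_def inner_diff_right inner_sum_orthonormal orthonormal_eigenvectors_def)
  then show ?thesis by simp
qed

lemma matrix_vector_mult_eigenbasis_expansion:
  fixes M :: "real^'n^'m"
  assumes "orthonormal_eigenvectors A E" "\<And>x. (\<forall>e\<in>E. orthogonal e x) \<Longrightarrow> x = 0"
  shows "M *v x = (\<Sum>e\<in>E. (e \<bullet> x) *\<^sub>R (M *v e))"
proof -
  have "M *v x = M *v (\<Sum>e\<in>E. (e \<bullet> x) *\<^sub>R e)"
    by (simp only: orthonormal_eigenbasis_expansion[OF assms, of x, symmetric])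
  then show ?thesis by (simp add: vec.sum matrix_vector_mult_scaleR)
qed

lemma sym_pos_sqrt_unique:
  fixes A :: "real^'n^'n"
  assumes A: "sym_pos_def A" and S: "sym_pos_def S" "S ** S = A" and T: "sym_pos_def T" "T ** T = A"
  shows "S = T"
proof -
  have sym: "transpose A = A" and pd: "\<And>x. x \<noteq> 0 \<Longrightarrow> 0 < x \<bullet> (A *v x)"
    using A unfolding sym_pos_def_def by auto
  obtain E where E: "orthonormal_eigenvectors A E" and complete: "\<And>x. (\<forall>e\<in>E. orthogonal e x) \<Longrightarrow> x = 0"
    using orthonormal_eigenbasis_exists[OF sym] by blast
  have agree: "S *v e = T *v e" if "e \<in> E" for e
  proof -
    have "A *v e = (e \<bullet> (A *v e)) *\<^sub>R e" "norm e = 1"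
      using E that unfolding orthonormal_eigenvectors_def by auto
    moreover from \<open>norm e = 1\<close> have "0 \<le> e \<bullet> (A *v e)" using pd[of e] by fastforce
    ultimately show ?thesis using sym_pos_sqrt_on_eigenvector[OF S] sym_pos_sqrt_on_eigenvector[OF T] by simp
  qed
  show ?thesis
  proof (rule matrix_eq[THEN iffD2], intro allI)
    fix x
    show "S *v x = T *v x"
      by (subst (1 2) matrix_vector_mult_eigenbasis_expansion[OF E complete]) (auto intro!: sum.cong simp: agree)
  qed
qed

lemma sym_pos_sqrt_exists:
  fixes A :: "real^'n^'n"
  assumes "sym_pos_def A"
  shows "\<exists>S. sym_pos_def S \<and> S ** S = A"
proof -
  have sym: "transpose A = A" and pd: "\<And>x. x \<noteq> 0 \<Longrightarrow> 0 < x \<bullet> (A *v x)"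
    using assms unfolding sym_pos_def_def by auto
  obtain E where E: "orthonormal_eigenvectors A E" and complete: "\<And>x. (\<forall>e\<in>E. orthogonal e x) \<Longrightarrow> x = 0"
    using orthonormal_eigenbasis_exists[OF sym] by blast
  have finE: "finite E" and orth: "pairwise orthogonal E" and unit: "\<And>e. e \<in> E \<Longrightarrow> norm e = 1"
    using E unfolding orthonormal_eigenvectors_def by auto
  define eigval where "eigval e = e \<bullet> (A *v e)" for e
  have eig: "A *v e = eigval e *\<^sub>R e" if "e \<in> E" for e
    using E that unfolding orthonormal_eigenvectors_def eigval_def by blast
  have eigval_pos: "0 < eigval e" if "e \<in> E" for e
    unfolding eigval_def using pd unit[OF that] by (metis norm_zero zero_neq_one)
  define s where "s x = (\<Sum>e\<in>E. (sqrt (eigval e) * (e \<bullet> x)) *\<^sub>R e)" for x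
  have s_coeff: "e \<bullet> s x = sqrt (eigval e) * (e \<bullet> x)" if "e \<in> E" for e x
    unfolding s_def using inner_sum_orthonormal[OF orth unit finE that] .
  have "linear s"
    by (rule linearI) (simp_all add: s_def inner_add_right scaleR_add_left sum.distrib
        scaleR_sum_right algebra_simps)
  define S where "S = matrix s"
  have Sx: "S *v x = s x" for x unfolding S_def using \<open>linear s\<close> by simp
  have "S ** S = A"
  proof (rule matrix_eq[THEN iffD2], intro allI)
    fix x
    have "(S ** S) *v x = s (s x)" by (simp add: Sx matrix_vector_mul_assoc[symmetric])
    also have "\<dots> = (\<Sum>e\<in>E. (eigval e * (e \<bullet> x)) *\<^sub>R e)"
      unfolding s_def[of "s x"] using eigval_pos
      by (intro sum.cong) (auto simp: s_coeff mult.assoc[symmetric] less_imp_le)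
    also have "\<dots> = A *v x"
      by (subst matrix_vector_mult_eigenbasis_expansion[OF E complete, of A])
        (auto intro!: sum.cong simp: eig)
    finally show "(S ** S) *v x = A *v x" .
  qed
  moreover have "transpose S = S"
  proof -
    have "adjoint s = s"
      by (rule adjoint_unique) (simp add: s_def inner_sum_right inner_sum_left algebra_simps inner_commute)
    then show ?thesis using matrix_adjoint[OF \<open>linear s\<close>] unfolding S_def by simp
  qed
  moreover have "0 < x \<bullet> (S *v x)" if "x \<noteq> 0" for x
  proof -
    obtain e where "e \<in> E" "e \<bullet> x \<noteq> 0" using complete \<open>x \<noteq> 0\<close> unfolding orthogonal_def by blast
    then have "0 < sqrt (eigval e) * (e \<bullet> x)\<^sup>2" using eigval_pos by simp
    also have "\<dots> \<le> (\<Sum>e\<in>E. sqrt (eigval e) * (e \<bullet> x)\<^sup>2)"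
      using \<open>e \<in> E\<close> finE eigval_pos by (intro member_le_sum) (auto simp: less_imp_le)
    also have "\<dots> = x \<bullet> (S *v x)"
      by (simp add: Sx s_def inner_sum_right power2_eq_square inner_commute algebra_simps)
    finally show ?thesis .
  qed
  ultimately show ?thesis unfolding sym_pos_def_def by blast
qed

lemma mat_sqrt_square:
  assumes "sym_pos_def A"
  shows "mat_sqrt A ** mat_sqrt A = A"
proof -
  have "\<exists>!S. sym_pos_def S \<and> S ** S = A"
    using sym_pos_sqrt_exists[OF assms] sym_pos_sqrt_unique[OF assms] by blast
  from theI'[OF this] show ?thesis unfolding mat_sqrt_def by blast
qed

lemma lipschitz_growth_F_map:
  assumes "0 \<le> \<alpha>" "\<alpha> \<le> \<beta>"
  shows "lipschitz_growth \<beta> (F_map A \<alpha>)"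
proof (cases "0 < \<alpha>")
  case True
  then have "F_map A \<alpha> = (\<lambda>u. A *v (norm u powr \<alpha> *\<^sub>R u))"
    by (simp add: fun_eq_iff F_map_def matrix_vector_mult_scaleR)
  moreover have "lipschitz_growth \<beta> (\<lambda>w::real^_. norm w powr \<alpha> *\<^sub>R w)"
    using True assms by (simp add: lipschitz_growth_norm_powr_scaleR)
  ultimately show ?thesis
    using lipschitz_growth_linear_comp[OF matrix_vector_mul_bounded_linear] by simp
next
  case False
  then have "F_map A \<alpha> = (\<lambda>u. A *v u)" by (simp add: fun_eq_iff F_map_def)
  then show ?thesis
    using lipschitz_growth_linear_comp[OF matrix_vector_mul_bounded_linear lipschitz_growth_id] by simp
qed

lemma lipschitz_growth_Ft_map:
  assumes "sym_pos_def A" "0 \<le> \<alpha>" "\<alpha> \<le> \<beta>"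
  shows "lipschitz_growth \<beta> (Ft_map A \<alpha>)"
proof (cases "0 < \<alpha>")
  case True
  define S where "S = mat_sqrt A"
  have "Ft_map A \<alpha> = (\<lambda>u. S *v (norm (S *v u) powr \<alpha> *\<^sub>R (S *v u)))"
    using True mat_sqrt_square[OF assms(1)]
    by (simp add: fun_eq_iff Ft_map_def matrix_vector_mult_scaleR matrix_vector_mul_assoc S_def)
  moreover have "lipschitz_growth \<beta> (\<lambda>w::real^_. norm w powr \<alpha> *\<^sub>R w)"
    using True assms by (simp add: lipschitz_growth_norm_powr_scaleR)
  then have "lipschitz_growth \<beta> (\<lambda>u. norm (S *v u) powr \<alpha> *\<^sub>R (S *v u))"
    using lipschitz_growth_comp_linear[OF matrix_vector_mul_bounded_linear, where h="\<lambda>w. norm w powr \<alpha> *\<^sub>R w"]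
      assms by fastforce
  ultimately show ?thesis
    using lipschitz_growth_linear_comp[OF matrix_vector_mul_bounded_linear] by simp
next
  case False
  then have "Ft_map A \<alpha> = (\<lambda>u. A *v u)" by (simp add: fun_eq_iff Ft_map_def)
  then show ?thesis
    using lipschitz_growth_linear_comp[OF matrix_vector_mul_bounded_linear lipschitz_growth_id] by simp
qed

section \<open>The nonlinearity \<open>G\<^sub>B\<close>\<close>

definition quad_ratio :: "real^'n^'n \<Rightarrow> real^'n \<Rightarrow> real" where
  "quad_ratio M u = (if u = 0 then 0 else u \<bullet> (M *v u) / norm u)"

lemma G_B_component: "G_B As u $ i = quad_ratio (As i) u * u $ i"
  by (simp add: G_B_def B_map_def quad_ratio_def)

lemma abs_inner_matrix_le:
  assumes "\<And>x. norm (M *v x) \<le> K * norm x"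
  shows "\<bar>u \<bullet> (M *v w)\<bar> \<le> K * norm u * norm w"
proof -
  have "\<bar>u \<bullet> (M *v w)\<bar> \<le> norm u * norm (M *v w)" by (rule Cauchy_Schwarz_ineq2)
  also have "\<dots> \<le> norm u * (K * norm w)" by (intro mult_left_mono assms) simp
  finally show ?thesis by (simp add: algebra_simps)
qed

lemma abs_quad_ratio_le:
  assumes "\<And>x. norm (M *v x) \<le> K * norm x"
  shows "\<bar>quad_ratio M u\<bar> \<le> K * norm u"
proof (cases "u = 0")
  case False
  then have "\<bar>quad_ratio M u\<bar> = \<bar>u \<bullet> (M *v u)\<bar> / norm u" by (simp add: quad_ratio_def abs_divide)
  also have "\<dots> \<le> K * norm u * norm u / norm u"
    by (intro divide_right_mono abs_inner_matrix_le assms) simp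
  finally show ?thesis using False by simp
qed (simp add: quad_ratio_def)

lemma abs_quotient_diff_le:
  fixes P Q a b d K :: real
  assumes "0 < b" "b \<le> a" "0 < K" "\<bar>P - Q\<bar> \<le> 2 * K * a * d" "\<bar>Q\<bar> \<le> K * b\<^sup>2" "\<bar>a - b\<bar> \<le> d"
  shows "\<bar>P / a - Q / b\<bar> \<le> 3 * K * d"
proof -
  have "0 < a" "0 \<le> d" using assms by auto
  have "\<bar>(P - Q) / a\<bar> \<le> 2 * K * d"
    using assms \<open>0 < a\<close> by (simp add: abs_divide divide_le_eq algebra_simps)
  moreover have "\<bar>Q * (b - a) / (a * b)\<bar> \<le> K * d"
  proof -
    have "\<bar>Q * (b - a)\<bar> \<le> K * b\<^sup>2 * d"
      unfolding abs_mult using assms by (intro mult_mono) (auto simp: abs_minus_commute)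
    also have "\<dots> \<le> K * d * (a * b)"
      using assms \<open>0 \<le> d\<close> by (simp add: power2_eq_square mult_left_mono mult_right_mono algebra_simps)
    finally show ?thesis using \<open>0 < a\<close> assms(1) by (simp add: abs_divide divide_le_eq)
  qed
  moreover have "P / a - Q / b = (P - Q) / a + Q * (b - a) / (a * b)"
    using \<open>0 < a\<close> assms(1) by (simp add: field_simps)
  ultimately show ?thesis by linarith
qed

lemma quad_ratio_lipschitz:
  assumes K: "0 < K" "\<And>x. norm (M *v x) \<le> K * norm x"
  shows "\<bar>quad_ratio M u - quad_ratio M v\<bar> \<le> 3 * K * norm (u - v)"
proof -
  have *: "\<bar>quad_ratio M u - quad_ratio M v\<bar> \<le> 3 * K * norm (u - v)"
    if le: "norm v \<le> norm u" for u v
  proof (cases "v = 0")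
    case True
    then show ?thesis using abs_quad_ratio_le[OF K(2), of u] K by (simp add: quad_ratio_def)
  next
    case False
    then have "0 < norm v" "u \<noteq> 0" using le by auto
    have "u \<bullet> (M *v u) - v \<bullet> (M *v v) = (u - v) \<bullet> (M *v u) + v \<bullet> (M *v (u - v))"
      by (simp add: vec.diff inner_diff_left inner_diff_right)
    then have "\<bar>u \<bullet> (M *v u) - v \<bullet> (M *v v)\<bar> \<le> K * norm (u - v) * norm u + K * norm v * norm (u - v)"
      using abs_inner_matrix_le[OF K(2), of "u - v" u] abs_inner_matrix_le[OF K(2), of v "u - v"] by linarith
    also have "\<dots> \<le> 2 * K * norm u * norm (u - v)"
      using le K by (simp add: algebra_simps mult_left_mono mult_right_mono)
    finally have "\<bar>quad_ratio M u * norm u - quad_ratio M v * norm v\<bar> \<le> 2 * K * norm u * norm (u - v)"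
      using \<open>u \<noteq> 0\<close> False by (simp add: quad_ratio_def)
    moreover have "\<bar>v \<bullet> (M *v v)\<bar> \<le> K * (norm v)\<^sup>2"
      using abs_inner_matrix_le[OF K(2), of v v] by (simp add: power2_eq_square algebra_simps)
    ultimately have "\<bar>(u \<bullet> (M *v u)) / norm u - (v \<bullet> (M *v v)) / norm v\<bar> \<le> 3 * K * norm (u - v)"
      using \<open>u \<noteq> 0\<close> False
      by (intro abs_quotient_diff_le[OF \<open>0 < norm v\<close> le K(1)] norm_triangle_ineq3) (simp_all add: quad_ratio_def)
    then show ?thesis using \<open>u \<noteq> 0\<close> False by (simp add: quad_ratio_def)
  qed
  show ?thesis
    using *[of v u] *[of u v] by (cases "norm v \<le> norm u") (auto simp: abs_minus_commute norm_minus_commute)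
qed

lemma lipschitz_growth_G_B:
  fixes As :: "'n \<Rightarrow> real^'n^'n"
  assumes "1 \<le> \<beta>"
  shows "lipschitz_growth \<beta> (G_B As)"
proof -
  have "\<exists>K>0. \<forall>x. norm (As i *v x) \<le> K * norm x" for i
    using bounded_linear.pos_bounded[OF matrix_vector_mul_bounded_linear[of "As i"]]
    by (simp add: mult.commute)
  then obtain K where K: "\<And>i. 0 < K i" "\<And>i x. norm (As i *v x) \<le> K i * norm x"
    by metis
  define L where "L = (\<Sum>i\<in>UNIV. K i)"
  have "K i \<le> L" for i unfolding L_def by (rule member_le_sum) (use K in \<open>auto intro: less_imp_le\<close>)
  then have "0 < L" using K(1) by (meson less_le_trans)
  show ?thesis unfolding lipschitz_growth_def
  proof (intro exI[of _ "6 * L"] conjI allI)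
    fix u v :: "real^'n"
    have comp: "\<bar>(G_B As u - G_B As v) $ i\<bar> \<le> 3 * K i * (norm u + norm v) * norm (u - v)" for i
    proof -
      let ?q = "quad_ratio (As i)"
      have "(G_B As u - G_B As v) $ i = ?q u * (u $ i - v $ i) + (?q u - ?q v) * v $ i"
        by (simp add: G_B_component algebra_simps)
      then have "\<bar>(G_B As u - G_B As v) $ i\<bar> \<le> \<bar>?q u\<bar> * \<bar>u $ i - v $ i\<bar> + \<bar>?q u - ?q v\<bar> * \<bar>v $ i\<bar>"
        by (simp add: abs_mult[symmetric] abs_triangle_ineq)
      also have "\<dots> \<le> (K i * norm u) * norm (u - v) + (3 * K i * norm (u - v)) * norm v"
      proof (intro add_mono mult_mono)
        show "\<bar>?q u\<bar> \<le> K i * norm u" by (rule abs_quad_ratio_le[OF K(2)])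
        show "\<bar>?q u - ?q v\<bar> \<le> 3 * K i * norm (u - v)" by (rule quad_ratio_lipschitz[OF K(1,2)])
        show "\<bar>u $ i - v $ i\<bar> \<le> norm (u - v)" using component_le_norm_cart[of "u - v" i] by simp
        show "\<bar>v $ i\<bar> \<le> norm v" by (rule component_le_norm_cart)
      qed (use K(1)[of i] in simp_all)
      also have "\<dots> \<le> 3 * K i * (norm u + norm v) * norm (u - v)"
        using K(1)[of i] by (simp add: algebra_simps)
      finally show ?thesis .
    qed
    have "norm x \<le> 1 + norm x powr \<beta>" for x :: "real^'n"
      using powr_le_one_plus_powr[of 1 \<beta> "norm x"] assms by simp
    from this[of u] this[of v]
    have "norm u + norm v \<le> 2 * (1 + norm u powr \<beta> + norm v powr \<beta>)"
      using powr_ge_zero[of "norm u" \<beta>] powr_ge_zero[of "norm v" \<beta>] unfolding distrib_left by linarith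
    have "norm (G_B As u - G_B As v) \<le> (\<Sum>i\<in>UNIV. \<bar>(G_B As u - G_B As v) $ i\<bar>)"
      by (rule norm_le_l1_cart)
    also have "\<dots> \<le> (\<Sum>i\<in>UNIV. 3 * K i * (norm u + norm v) * norm (u - v))"
      by (intro sum_mono comp)
    also have "\<dots> = 3 * L * (norm u + norm v) * norm (u - v)"
      unfolding L_def by (simp add: sum_distrib_right sum_distrib_left algebra_simps)
    also have "\<dots> \<le> 3 * L * (2 * (1 + norm u powr \<beta> + norm v powr \<beta>)) * norm (u - v)"
      using \<open>norm u + norm v \<le> _\<close> \<open>0 < L\<close> by (intro mult_right_mono mult_left_mono) auto
    finally show "norm (G_B As u - G_B As v) \<le> 6 * L * (1 + norm u powr \<beta> + norm v powr \<beta>) * norm (u - v)"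
      by (simp add: algebra_simps)
  qed (use \<open>0 < L\<close> in simp)
qed

section \<open>Monotonicity of sums\<close>

lemma monotone_map_sum:
  fixes f :: "'a \<Rightarrow> real^'n \<Rightarrow> real^'n"
  assumes "\<And>k. k \<in> S \<Longrightarrow> monotone_map (f k)"
  shows "monotone_map (\<lambda>u. \<Sum>k\<in>S. f k u)"
  unfolding monotone_map_def
proof (intro allI)
  fix u v :: "real^'n"
  have "((\<Sum>k\<in>S. f k u) - (\<Sum>k\<in>S. f k v)) \<bullet> (u - v) = (\<Sum>k\<in>S. (f k u - f k v) \<bullet> (u - v))"
    by (simp add: sum_subtractf[symmetric] inner_sum_left)
  also have "\<dots> \<ge> 0" using assms unfolding monotone_map_def by (intro sum_nonneg) auto
  finally show "((\<Sum>k\<in>S. f k u) - (\<Sum>k\<in>S. f k v)) \<bullet> (u - v) \<ge> 0" .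
qed

lemma gamma_monotone_add:
  assumes "gamma_monotone \<gamma> F" "monotone_map G"
  shows "gamma_monotone \<gamma> (\<lambda>u. F u + G u)"
proof -
  obtain C where C: "0 < C" "\<And>u v. C * norm (u - v) powr \<gamma> \<le> (F u - F v) \<bullet> (u - v)"
    using assms(1) unfolding gamma_monotone_def by blast
  have "C * norm (u - v) powr \<gamma> \<le> (F u + G u - (F v + G v)) \<bullet> (u - v)" for u v
    using C(2)[of u v] assms(2) unfolding add_diff_add inner_add_left monotone_map_def
    by (metis add_increasing2)
  then show ?thesis unfolding gamma_monotone_def using C(1) by blast
qed

lemma gamma_monotone_sum:
  assumes "finite S" "k \<in> S" "gamma_monotone \<gamma> (f k)" "\<And>j. j \<in> S - {k} \<Longrightarrow> monotone_map (f j)"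
  shows "gamma_monotone \<gamma> (\<lambda>u. \<Sum>j\<in>S. f j u)"
proof -
  have "gamma_monotone \<gamma> (\<lambda>u. f k u + (\<Sum>j\<in>S - {k}. f j u))"
    using assms by (intro gamma_monotone_add monotone_map_sum)
  then show ?thesis using assms(1,2) by (simp add: sum.remove)
qed

lemma le_of_strict_mono_upto:
  fixes \<alpha> :: "nat \<Rightarrow> real"
  assumes "\<And>k. k < N \<Longrightarrow> \<alpha> k < \<alpha> (Suc k)" "i \<le> j" "j \<le> N"
  shows "\<alpha> i \<le> \<alpha> j"
  using assms(2,3)
proof (induction j rule: dec_induct)
  case (step j)
  then show ?case using assms(1)[of j] by simp
qed simp

definition growth_estimates :: "real \<Rightarrow> (real^'n \<Rightarrow> real^'n) \<Rightarrow> bool" where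
  "growth_estimates \<beta> F \<longleftrightarrow> lipschitz_growth \<beta> F \<and> gamma_monotone (\<beta> + 2) F"

lemma growth_estimates_sum:
  fixes f :: "nat \<Rightarrow> real^'n \<Rightarrow> real^'n"
  assumes "\<And>k. k \<le> N \<Longrightarrow> lipschitz_growth \<beta> (f k)" "\<And>k. k < N \<Longrightarrow> monotone_map (f k)"
    and "gamma_monotone (\<beta> + 2) (f N)"
  shows "growth_estimates \<beta> (\<lambda>u. \<Sum>k\<le>N. f k u)"
  unfolding growth_estimates_def
proof
  show "lipschitz_growth \<beta> (\<lambda>u. \<Sum>k\<le>N. f k u)"
    using assms(1) by (intro lipschitz_growth_sum) auto
  show "gamma_monotone (\<beta> + 2) (\<lambda>u. \<Sum>k\<le>N. f k u)"
    using assms(2,3) by (intro gamma_monotone_sum[where k=N]) auto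
qed

lemma growth_estimates_sum_add:
  fixes f :: "nat \<Rightarrow> real^'n \<Rightarrow> real^'n"
  assumes "\<And>k. k \<le> N \<Longrightarrow> lipschitz_growth \<beta> (f k)" "lipschitz_growth \<beta> G"
    and "\<And>k. k \<le> N \<Longrightarrow> monotone_map (f k)" "monotone_map G"
    and "gamma_monotone (\<beta> + 2) (f N) \<or> gamma_monotone (\<beta> + 2) G"
  shows "growth_estimates \<beta> (\<lambda>u. (\<Sum>k\<le>N. f k u) + G u)"
  unfolding growth_estimates_def
proof
  show "lipschitz_growth \<beta> (\<lambda>u. (\<Sum>k\<le>N. f k u) + G u)"
    using assms(1,2) by (intro lipschitz_growth_add lipschitz_growth_sum) auto
  show "gamma_monotone (\<beta> + 2) (\<lambda>u. (\<Sum>k\<le>N. f k u) + G u)"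
    using assms(5)
  proof
    assume "gamma_monotone (\<beta> + 2) (f N)"
    then have "gamma_monotone (\<beta> + 2) (\<lambda>u. \<Sum>k\<le>N. f k u)"
      using assms(3) by (intro gamma_monotone_sum[where k=N]) auto
    then show ?thesis using assms(4) by (rule gamma_monotone_add)
  next
    assume "gamma_monotone (\<beta> + 2) G"
    moreover have "monotone_map (\<lambda>u. \<Sum>k\<le>N. f k u)"
      using assms(3) by (intro monotone_map_sum) auto
    ultimately have "gamma_monotone (\<beta> + 2) (\<lambda>u. G u + (\<Sum>k\<le>N. f k u))"
      by (rule gamma_monotone_add)
    then show ?thesis by (simp add: add.commute)
  qed
qed

theorem mainTheorem14:
  fixes N :: nat and \<alpha> :: "nat \<Rightarrow> real" and Abar :: "nat \<Rightarrow> real^'n^'n"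
    and tilde :: "nat \<Rightarrow> bool" and As :: "'n \<Rightarrow> real^'n^'n" and cs :: nat
  defines "Fk \<equiv> (\<lambda>k. if tilde k then Ft_map (Abar k) (\<alpha> k) else F_map (Abar k) (\<alpha> k))"
  defines "F \<equiv> (if cs = 1 then G_B As
                 else if cs = 2 then (\<lambda>u. \<Sum>k\<le>N. Fk k u)
                 else (\<lambda>u. (\<Sum>k\<le>N. Fk k u) + G_B As u))"
  defines "\<beta> \<equiv> (if cs = 1 then 1 else if cs = 2 then \<alpha> N else max (\<alpha> N) 1)"
  assumes n2: "CARD('n) \<ge> 2"
    and alpha0: "0 \<le> \<alpha> 0"
    and alpha_inc: "\<And>k. k < N \<Longrightarrow> \<alpha> k < \<alpha> (Suc k)"
    and tilde_spd: "\<And>k. k \<le> N \<Longrightarrow> tilde k \<Longrightarrow> sym_pos_def (Abar k)"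
    and As_nz: "\<And>i. As i \<noteq> 0"
    and cases: "cs \<in> {1, 2, 3}"
    and case1: "cs = 1 \<Longrightarrow> gamma_monotone 3 (G_B As)"
    and case2: "cs = 2 \<Longrightarrow> (\<forall>k<N. monotone_map (Fk k)) \<and> \<alpha> N > 0
                              \<and> gamma_monotone (\<alpha> N + 2) (Fk N)"
    and case3: "cs = 3 \<Longrightarrow> (\<forall>k\<le>N. monotone_map (Fk k)) \<and> monotone_map (G_B As)
                 \<and> (\<alpha> N < 1 \<longrightarrow> gamma_monotone 3 (G_B As))
                 \<and> (\<alpha> N > 1 \<longrightarrow> gamma_monotone (\<alpha> N + 2) (Fk N))
                 \<and> (\<alpha> N = 1 \<longrightarrow> gamma_monotone 3 (Fk N) \<or> gamma_monotone 3 (G_B As))"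
  shows "\<exists>c1>0. \<exists>c2>0. \<forall>u v.
           norm (F u - F v) \<le> c1 * (1 + norm u powr \<beta> + norm v powr \<beta>) * norm (u - v)
         \<and> (F u - F v) \<bullet> (u - v) \<ge> c2 * norm (u - v) powr (\<beta> + 2)"
proof -
  have lip_Fk: "lipschitz_growth b (Fk k)" if "k \<le> N" "\<alpha> N \<le> b" for k b
    using that alpha0 tilde_spd[OF that(1)]
      le_of_strict_mono_upto[where \<alpha>=\<alpha> and N=N and i=0 and j=k, OF alpha_inc]
      le_of_strict_mono_upto[where \<alpha>=\<alpha> and N=N and i=k and j=N, OF alpha_inc]
    by (auto simp: Fk_def intro!: lipschitz_growth_F_map lipschitz_growth_Ft_map)
  have "growth_estimates \<beta> F"
  proof -
    consider "cs = 1" | "cs = 2" | "cs = 3" using cases by auto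
    then show ?thesis
    proof cases
      case 1
      then show ?thesis
        using case1 lipschitz_growth_G_B[of 1 As] by (simp add: growth_estimates_def F_def \<beta>_def)
    next
      case 2
      then show ?thesis using case2 lip_Fk by (simp add: growth_estimates_sum F_def \<beta>_def)
    next
      case 3
      then have "gamma_monotone (\<beta> + 2) (Fk N) \<or> gamma_monotone (\<beta> + 2) (G_B As)"
        using case3 by (cases "\<alpha> N" "1::real" rule: linorder_cases) (auto simp: \<beta>_def max_def)
      moreover have "1 \<le> \<beta>" "\<alpha> N \<le> \<beta>" using 3 by (simp_all add: \<beta>_def)
      ultimately have "growth_estimates \<beta> (\<lambda>u. (\<Sum>k\<le>N. Fk k u) + G_B As u)"
        using case3[OF 3] lip_Fk lipschitz_growth_G_B[of \<beta> As] by (intro growth_estimates_sum_add) auto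
      then show ?thesis using 3 by (simp add: F_def)
    qed
  qed
  then show ?thesis unfolding growth_estimates_def lipschitz_growth_def gamma_monotone_def by blast
qed

end
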